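(* Let $n\geq 3$ and $m\geq 1$ be integers. Identify $\Delta_m^{3,2}=\mathrm{VR}(\{0,\ldots,m\}^3;2)$ with the subcomplex of $\Delta_m^{n,2}=\mathrm{VR}(\{0,\ldots,m\}^n;2)$ spanned by the vertices of the form $(v_1,v_2,v_3,0,\ldots,0)$. Then there exists a retraction $\Delta_m^{n,2}\to\Delta_m^{3,2}$.
   Context: $\{0,\ldots,m\}^k\subseteq\mathbb{Z}^k$ carries the Manhattan metric $d(x,y)=\sum_i |x_i-y_i|$. For a metric space $X$ and $r\geq 0$, $\mathrm{VR}(X;r)$ is the simplicial complex on $X$ whose simplices are the finite subsets of diameter at most $r$. *)

theory Defs
  imports Main
begin

text \<open>Points of Z^k are encoded as functions nat => int that vanish at indices >= k.
  With this encoding {0..m}^3 is literally the set of points of {0..m}^n of the form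
  (v1,v2,v3,0,...,0).\<close>

definition grid :: "nat \<Rightarrow> nat \<Rightarrow> (nat \<Rightarrow> int) set" where
  "grid k m = {x. (\<forall>i<k. 0 \<le> x i \<and> x i \<le> int m) \<and> (\<forall>i\<ge>k. x i = 0)}"

definition manhattan :: "nat \<Rightarrow> (nat \<Rightarrow> int) \<Rightarrow> (nat \<Rightarrow> int) \<Rightarrow> int" where
  "manhattan k x y = (\<Sum>i<k. \<bar>x i - y i\<bar>)"

definition VR :: "'a set \<Rightarrow> ('a \<Rightarrow> 'a \<Rightarrow> int) \<Rightarrow> int \<Rightarrow> 'a set set" where
  "VR X d r = {\<sigma>. \<sigma> \<subseteq> X \<and> finite \<sigma> \<and> \<sigma> \<noteq> {} \<and> (\<forall>x\<in>\<sigma>. \<forall>y\<in>\<sigma>. d x y \<le> r)}"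

definition simplicial_map :: "'a set set \<Rightarrow> 'b set set \<Rightarrow> ('a \<Rightarrow> 'b) \<Rightarrow> bool" where
  "simplicial_map K L f \<longleftrightarrow> (\<forall>\<sigma>\<in>K. f ` \<sigma> \<in> L)"

definition simplicial_retraction :: "'a set set \<Rightarrow> 'a set set \<Rightarrow> ('a \<Rightarrow> 'a) \<Rightarrow> bool" where
  "simplicial_retraction K L f \<longleftrightarrow>
     L \<subseteq> K \<and> simplicial_map K L f \<and> (\<forall>v\<in>\<Union>L. f v = v)"

end

theory Submission
  imports Defs
begin

text \<open>Forgetting all coordinates from the k-th on maps the grid in Z^n onto the grid in Z^k,
  fixes the latter pointwise, and does not increase Manhattan distances, while on the small
  grid the two Manhattan distances agree. Any vertex map with these properties is a
  simplicial retraction between the Vietoris-Rips complexes at every scale. So the retraction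
  exists for all k \<le> n and all m.\<close>

lemma VR_mono:
  assumes "Y \<subseteq> X" and "\<And>x y. x \<in> Y \<Longrightarrow> y \<in> Y \<Longrightarrow> d x y \<le> e x y"
  shows "VR Y e r \<subseteq> VR X d r"
proof
  fix \<sigma> assume \<sigma>: "\<sigma> \<in> VR Y e r"
  have "d x y \<le> r" if "x \<in> \<sigma>" "y \<in> \<sigma>" for x y
  proof -
    have "d x y \<le> e x y" using \<sigma> that by (intro assms(2)) (auto simp: VR_def)
    also have "e x y \<le> r" using \<sigma> that by (auto simp: VR_def)
    finally show ?thesis .
  qed
  with \<sigma> assms(1) show "\<sigma> \<in> VR X d r" by (auto simp: VR_def)
qed

lemma simplicial_map_VR:
  assumes "f ` X \<subseteq> Y" and "\<And>x y. x \<in> X \<Longrightarrow> y \<in> X \<Longrightarrow> e (f x) (f y) \<le> d x y"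
  shows "simplicial_map (VR X d r) (VR Y e r) f"
  unfolding simplicial_map_def
proof
  fix \<sigma> assume \<sigma>: "\<sigma> \<in> VR X d r"
  have "e (f x) (f y) \<le> r" if "x \<in> \<sigma>" "y \<in> \<sigma>" for x y
  proof -
    have "e (f x) (f y) \<le> d x y" using \<sigma> that by (intro assms(2)) (auto simp: VR_def)
    also have "d x y \<le> r" using \<sigma> that by (auto simp: VR_def)
    finally show ?thesis .
  qed
  moreover have "f ` \<sigma> \<subseteq> Y" using \<sigma> assms(1) by (auto simp: VR_def)
  ultimately show "f ` \<sigma> \<in> VR Y e r" using \<sigma> by (auto simp: VR_def)
qed

lemma simplicial_retraction_VR:
  assumes "Y \<subseteq> X" and "f ` X \<subseteq> Y" and "\<And>y. y \<in> Y \<Longrightarrow> f y = y"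
    and "\<And>x y. x \<in> Y \<Longrightarrow> y \<in> Y \<Longrightarrow> d x y \<le> e x y"
    and "\<And>x y. x \<in> X \<Longrightarrow> y \<in> X \<Longrightarrow> e (f x) (f y) \<le> d x y"
  shows "simplicial_retraction (VR X d r) (VR Y e r) f"
  unfolding simplicial_retraction_def
proof (intro conjI ballI)
  show "VR Y e r \<subseteq> VR X d r" using assms(1,4) by (rule VR_mono)
  show "simplicial_map (VR X d r) (VR Y e r) f" using assms(2,5) by (rule simplicial_map_VR)
  show "f v = v" if "v \<in> \<Union> (VR Y e r)" for v
    using that assms(3) by (auto simp: VR_def)
qed

definition truncate :: "nat \<Rightarrow> (nat \<Rightarrow> int) \<Rightarrow> nat \<Rightarrow> int" where
  "truncate k x = (\<lambda>i. if i < k then x i else 0)"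

lemma manhattan_split:
  assumes "k \<le> n"
  shows "manhattan n x y = manhattan k x y + (\<Sum>i\<in>{k..<n}. \<bar>x i - y i\<bar>)"
proof -
  have "{..<n} = {..<k} \<union> {k..<n}" using assms by auto
  then show ?thesis unfolding manhattan_def
    by (simp add: sum.union_disjoint[of "{..<k}" "{k..<n}"] ivl_disj_int)
qed

lemma manhattan_mono:
  assumes "k \<le> n"
  shows "manhattan k x y \<le> manhattan n x y"
  using manhattan_split[OF assms] sum_nonneg[of "{k..<n}" "\<lambda>i. \<bar>x i - y i\<bar>"] by simp

lemma manhattan_grid_eq:
  assumes "k \<le> n" and "x \<in> grid k m" and "y \<in> grid k m"
  shows "manhattan n x y = manhattan k x y"
proof -
  have "(\<Sum>i\<in>{k..<n}. \<bar>x i - y i\<bar>) = 0"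
    using assms(2,3) by (intro sum.neutral) (auto simp: grid_def)
  then show ?thesis using manhattan_split[OF assms(1)] by simp
qed

lemma manhattan_truncate: "manhattan k (truncate k x) (truncate k y) = manhattan k x y"
  unfolding manhattan_def truncate_def by simp

lemma grid_mono:
  assumes "k \<le> n"
  shows "grid k m \<subseteq> grid n m"
proof
  fix x assume x: "x \<in> grid k m"
  have "0 \<le> x i \<and> x i \<le> int m" for i
    using x by (cases "i < k") (auto simp: grid_def)
  with x assms show "x \<in> grid n m" by (auto simp: grid_def)
qed

lemma truncate_grid: "k \<le> n \<Longrightarrow> truncate k ` grid n m \<subseteq> grid k m"
  by (auto simp: grid_def truncate_def)

lemma truncate_id_on_grid: "x \<in> grid k m \<Longrightarrow> truncate k x = x"
  by (auto simp: grid_def truncate_def)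

lemma simplicial_retraction_VR_grid_truncate:
  assumes "k \<le> n"
  shows "simplicial_retraction (VR (grid n m) (manhattan n) r)
                               (VR (grid k m) (manhattan k) r) (truncate k)"
proof (rule simplicial_retraction_VR)
  show "grid k m \<subseteq> grid n m" using assms by (rule grid_mono)
  show "truncate k ` grid n m \<subseteq> grid k m" using assms by (rule truncate_grid)
  show "truncate k y = y" if "y \<in> grid k m" for y
    using that by (rule truncate_id_on_grid)
  show "manhattan n x y \<le> manhattan k x y" if "x \<in> grid k m" "y \<in> grid k m" for x y
    using manhattan_grid_eq[OF assms that] by simp
  show "manhattan k (truncate k x) (truncate k y) \<le> manhattan n x y" for x y
    using manhattan_mono[OF assms] by (simp add: manhattan_truncate)
qed

theorem proposition4p12:
  fixes n m :: nat
  assumes "n \<ge> 3" and "m \<ge> 1"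
  shows "\<exists>f. simplicial_retraction (VR (grid n m) (manhattan n) 2)
                                   (VR (grid 3 m) (manhattan 3) 2) f"
  using simplicial_retraction_VR_grid_truncate[OF assms(1)] by blast

end
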